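(* Let $T$ be a neutral tree on $n_1\geq 7$ vertices. Then the graph $T^{\dagger}$ (for any choice of pairing in its construction) is neutral.
   Context: All graphs are finite and simple. A leaf is a vertex of degree one. The leaf-connecting operation on a graph $G$ produces $G^{\dagger}$ as follows: (1) for each vertex $v$ of $G$, attach $d_v$ new pendant vertices (leaves) to $v$; (2) repeatedly join a pair of leaves by an edge until no leaf is left (so the new pendant vertices are paired up by a perfect matching). For a graph $G=(V,E)$ with $m=|E|\geq1$ and degrees $d_u$, the assortativity coefficient is $$r(G)=\frac{m^{-1}\sum_{e_{uv}\in E} d_{u}d_{v}-\Big[m^{-1}\sum_{e_{uv}\in E} \tfrac{1}{2}(d_{u}+d_{v})\Big]^{2}}{m^{-1}\sum_{e_{uv}\in E} \tfrac{1}{2}(d^{2}_{u}+d^{2}_{v})-\Big[m^{-1}\sum_{e_{uv}\in E} \tfrac{1}{2}(d_{u}+d_{v})\Big]^{2}},$$ sums over edges counting each edge once, defined whenever the denominator is nonzero; $G$ is neutral if $r(G)$ is defined and equals $0$. *)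

theory Defs
  imports Complex_Main
begin

definition simple_graph :: "'a set \<Rightarrow> 'a set set \<Rightarrow> bool" where
  "simple_graph V E \<longleftrightarrow> finite V \<and>
     (\<forall>e\<in>E. \<exists>u v. e = {u, v} \<and> u \<noteq> v \<and> u \<in> V \<and> v \<in> V)"

definition adj :: "'a set set \<Rightarrow> 'a \<Rightarrow> 'a \<Rightarrow> bool" where
  "adj E u v \<longleftrightarrow> u \<noteq> v \<and> {u, v} \<in> E"

definition deg :: "'a set set \<Rightarrow> 'a \<Rightarrow> nat" where
  "deg E v = card {e \<in> E. v \<in> e}"

definition connected_graph :: "'a set \<Rightarrow> 'a set set \<Rightarrow> bool" where
  "connected_graph V E \<longleftrightarrow>
     (\<forall>u\<in>V. \<forall>v\<in>V. (u, v) \<in> {(x, y). adj E x y}\<^sup>*)"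

definition is_cycle :: "'a set set \<Rightarrow> 'a list \<Rightarrow> bool" where
  "is_cycle E xs \<longleftrightarrow> length xs \<ge> 3 \<and> distinct xs \<and>
     (\<forall>i. Suc i < length xs \<longrightarrow> adj E (xs ! i) (xs ! Suc i)) \<and>
     adj E (last xs) (hd xs)"

definition tree :: "'a set \<Rightarrow> 'a set set \<Rightarrow> bool" where
  "tree V E \<longleftrightarrow> simple_graph V E \<and> V \<noteq> {} \<and> connected_graph V E \<and>
     \<not> (\<exists>xs. is_cycle E xs)"

text \<open>Assortativity coefficient (sums over edges, each edge once; an edge e = {u,v}
  contributes d_u d_v = prod over e, d_u + d_v = sum over e, etc.).\<close>

definition assort_mean :: "'a set set \<Rightarrow> real" where
  "assort_mean E = (1 / real (card E)) * (\<Sum>e\<in>E. (1/2) * (\<Sum>v\<in>e. real (deg E v)))"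

definition assort_num :: "'a set set \<Rightarrow> real" where
  "assort_num E = (1 / real (card E)) * (\<Sum>e\<in>E. (\<Prod>v\<in>e. real (deg E v)))
                  - (assort_mean E)\<^sup>2"

definition assort_den :: "'a set set \<Rightarrow> real" where
  "assort_den E = (1 / real (card E)) * (\<Sum>e\<in>E. (1/2) * (\<Sum>v\<in>e. (real (deg E v))\<^sup>2))
                  - (assort_mean E)\<^sup>2"

definition assortativity :: "'a set set \<Rightarrow> real" where
  "assortativity E = assort_num E / assort_den E"

definition neutral :: "'a set set \<Rightarrow> bool" where
  "neutral E \<longleftrightarrow> finite E \<and> card E \<ge> 1 \<and> assort_den E \<noteq> 0 \<and> assortativity E = 0"

definition perfect_matching :: "'a set \<Rightarrow> 'a set set \<Rightarrow> bool" where
  "perfect_matching L M \<longleftrightarrow>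
     (\<forall>e\<in>M. \<exists>a b. e = {a, b} \<and> a \<noteq> b \<and> a \<in> L \<and> b \<in> L) \<and>
     (\<forall>l\<in>L. \<exists>!e. e \<in> M \<and> l \<in> e)"

text \<open>(V', E') is a possible result G-dagger of the leaf-connecting operation applied to (V, E):
  a set L of new vertices, each new vertex l pendant to its parent p l, vertex v receiving
  exactly d_v new pendant vertices, and the new vertices paired up by a perfect matching M.\<close>
definition leaf_connect :: "'a set \<Rightarrow> 'a set set \<Rightarrow> 'a set \<Rightarrow> 'a set set \<Rightarrow> bool" where
  "leaf_connect V E V' E' \<longleftrightarrow>
     (\<exists>L p M. finite L \<and> L \<inter> V = {} \<and> (\<forall>l\<in>L. p l \<in> V) \<and>
        (\<forall>v\<in>V. card {l \<in> L. p l = v} = deg E v) \<and>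
        perfect_matching L M \<and>
        V' = V \<union> L \<and> E' = E \<union> (\<lambda>l. {l, p l}) ` L \<union> M)"

end

theory Submission
  imports Defs
begin

(* In G-dagger every old vertex has twice its old degree and every new vertex has degree 2.
   Its edges are the old edges, one pendant edge per edge end of G and one matching edge per
   edge of G; summing over these three families shows that the mean edge-end degree increases
   by exactly 1, the numerator of r is unchanged, and the denominator becomes
   2 den(G) + (mean - 1)^2, which is positive because den(G) is a variance and nonzero. *)

lemma simple_graph_edgeE:
  assumes "simple_graph V E" "e \<in> E"
  obtains u v where "e = {u, v}" "u \<noteq> v" "u \<in> V" "v \<in> V"
  using assms unfolding simple_graph_def by blast

lemma simple_graph_edge_subset: "simple_graph V E \<Longrightarrow> e \<in> E \<Longrightarrow> e \<subseteq> V"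
  by (erule simple_graph_edgeE) auto

lemma simple_graph_card_edge: "simple_graph V E \<Longrightarrow> e \<in> E \<Longrightarrow> card e = 2"
  by (erule simple_graph_edgeE) auto

lemma simple_graph_finite_edges:
  assumes "simple_graph V E" shows "finite E"
proof (rule finite_subset)
  show "E \<subseteq> Pow V" using simple_graph_edge_subset[OF assms] by blast
  show "finite (Pow V)" using assms by (simp add: simple_graph_def)
qed

lemma sum_deg_mult:
  fixes g :: "'a \<Rightarrow> real"
  assumes "simple_graph V E"
  shows "(\<Sum>v\<in>V. real (deg E v) * g v) = (\<Sum>e\<in>E. \<Sum>v\<in>e. g v)"
proof -
  have "(\<Sum>v\<in>V. real (deg E v) * g v) = (\<Sum>v\<in>V. \<Sum>e\<in>{e. e \<in> E \<and> v \<in> e}. g v)"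
    by (simp add: deg_def)
  also have "\<dots> = (\<Sum>e\<in>E. \<Sum>v\<in>{v. v \<in> V \<and> v \<in> e}. g v)"
    by (rule sum.swap_restrict)
      (use assms in \<open>simp_all add: simple_graph_def simple_graph_finite_edges\<close>)
  also have "\<dots> = (\<Sum>e\<in>E. \<Sum>v\<in>e. g v)"
  proof (rule sum.cong[OF refl])
    fix e assume "e \<in> E"
    then have "{v. v \<in> V \<and> v \<in> e} = e"
      using simple_graph_edge_subset[OF assms] by blast
    then show "(\<Sum>v\<in>{v. v \<in> V \<and> v \<in> e}. g v) = (\<Sum>v\<in>e. g v)" by simp
  qed
  finally show ?thesis .
qed

lemma perfect_matching_edgeE:
  assumes "perfect_matching L M" "e \<in> M"
  obtains a b where "e = {a, b}" "a \<noteq> b" "a \<in> L" "b \<in> L"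
proof -
  from assms have "\<exists>a b. e = {a, b} \<and> a \<noteq> b \<and> a \<in> L \<and> b \<in> L"
    by (simp add: perfect_matching_def)
  then show ?thesis using that by blast
qed

lemma perfect_matching_edge_subset: "perfect_matching L M \<Longrightarrow> e \<in> M \<Longrightarrow> e \<subseteq> L"
  by (erule perfect_matching_edgeE) auto

lemma perfect_matching_card_edge: "perfect_matching L M \<Longrightarrow> e \<in> M \<Longrightarrow> card e = 2"
  by (erule perfect_matching_edgeE) auto

lemma perfect_matching_finite:
  assumes "perfect_matching L M" "finite L" shows "finite M"
  by (rule finite_subset[of M "Pow L"]) (use assms perfect_matching_edge_subset in auto)

lemma perfect_matching_cover: "perfect_matching L M \<Longrightarrow> l \<in> L \<Longrightarrow> \<exists>e\<in>M. l \<in> e"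
  unfolding perfect_matching_def Ex1_def by blast

lemma perfect_matching_unique:
  "perfect_matching L M \<Longrightarrow> l \<in> L \<Longrightarrow> e \<in> M \<Longrightarrow> e' \<in> M \<Longrightarrow>
    l \<in> e \<Longrightarrow> l \<in> e' \<Longrightarrow> e = e'"
  unfolding perfect_matching_def Ex1_def by blast

lemma perfect_matching_card:
  assumes "perfect_matching L M" "finite L"
  shows "card L = 2 * card M"
proof -
  have union: "\<Union>M = L"
    using perfect_matching_cover[OF assms(1)] perfect_matching_edge_subset[OF assms(1)] by blast
  have "pairwise disjnt M"
    unfolding pairwise_def disjnt_def
    using perfect_matching_unique[OF assms(1)] perfect_matching_edge_subset[OF assms(1)] by blast
  then have "card (\<Union>M) = sum card M"
    by (rule card_Union_disjoint) (use assms(2) union in \<open>metis Union_upper finite_subset\<close>)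
  also have "\<dots> = 2 * card M"
    using perfect_matching_card_edge[OF assms(1)] by simp
  finally show ?thesis unfolding union .
qed

lemma real_deg_eq_sum: "finite E \<Longrightarrow> real (deg E v) = (\<Sum>e\<in>E. if v \<in> e then 1 else 0)"
  unfolding deg_def using sum.inter_filter[of E "\<lambda>_. 1 :: real" "\<lambda>e. v \<in> e"] by simp

definition degree_moment :: "'a set set \<Rightarrow> (real \<Rightarrow> real) \<Rightarrow> real" where
  "degree_moment E h = (\<Sum>e\<in>E. \<Sum>v\<in>e. h (real (deg E v)))"

definition degree_product_sum :: "'a set set \<Rightarrow> real" where
  "degree_product_sum E = (\<Sum>e\<in>E. \<Prod>v\<in>e. real (deg E v))"

lemma degree_moment_cmult: "degree_moment E (\<lambda>t. c * h t) = c * degree_moment E h"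
  unfolding degree_moment_def by (simp add: sum_distrib_left)

lemma assort_mean_eq: "assort_mean E = degree_moment E (\<lambda>t. t) / (2 * real (card E))"
  unfolding assort_mean_def degree_moment_def by (simp add: sum_divide_distrib mult.commute)

lemma assort_num_eq: "assort_num E = degree_product_sum E / real (card E) - (assort_mean E)\<^sup>2"
  unfolding assort_num_def degree_product_sum_def by simp

lemma assort_den_eq:
  "assort_den E = degree_moment E (\<lambda>t. t\<^sup>2) / (2 * real (card E)) - (assort_mean E)\<^sup>2"
  unfolding assort_den_def degree_moment_def by (simp add: sum_divide_distrib mult.commute)

lemma assort_den_nonneg:
  assumes "\<And>e. e \<in> E \<Longrightarrow> card e = 2"
  shows "0 \<le> assort_den E"
proof (cases "card E = 0")
  case True
  then show ?thesis by (simp add: assort_den_def assort_mean_def)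
next
  case False
  define \<mu> where "\<mu> = assort_mean E"
  define d where "d v = real (deg E v)" for v
  have "0 \<le> (\<Sum>e\<in>E. \<Sum>v\<in>e. (d v - \<mu>)\<^sup>2)"
    by (intro sum_nonneg) simp
  also have "\<dots> = (\<Sum>e\<in>E. (\<Sum>v\<in>e. (d v)\<^sup>2) - 2 * \<mu> * (\<Sum>v\<in>e. d v) + 2 * \<mu>\<^sup>2)"
  proof (rule sum.cong[OF refl])
    fix e assume "e \<in> E"
    have "(\<Sum>v\<in>e. (d v - \<mu>)\<^sup>2) = (\<Sum>v\<in>e. (d v)\<^sup>2 - 2 * \<mu> * d v + \<mu>\<^sup>2)"
      by (simp add: power2_diff algebra_simps)
    also have "\<dots> = (\<Sum>v\<in>e. (d v)\<^sup>2) - 2 * \<mu> * (\<Sum>v\<in>e. d v) + card e * \<mu>\<^sup>2"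
      by (simp add: sum.distrib sum_subtractf sum_distrib_left)
    finally show "(\<Sum>v\<in>e. (d v - \<mu>)\<^sup>2)
        = (\<Sum>v\<in>e. (d v)\<^sup>2) - 2 * \<mu> * (\<Sum>v\<in>e. d v) + 2 * \<mu>\<^sup>2"
      using assms[OF \<open>e \<in> E\<close>] by simp
  qed
  also have "\<dots> = degree_moment E (\<lambda>t. t\<^sup>2) - 2 * \<mu> * degree_moment E (\<lambda>t. t)
      + 2 * real (card E) * \<mu>\<^sup>2"
    unfolding degree_moment_def d_def by (simp add: sum.distrib sum_subtractf sum_distrib_left)
  also have "\<dots> = 2 * real (card E) * assort_den E"
    using False unfolding assort_den_eq \<mu>_def assort_mean_eq
    by (simp add: field_simps power2_eq_square)
  finally show ?thesis
    using False by (simp add: zero_le_mult_iff)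
qed

locale leaf_connection =
  fixes V :: "'a set" and E :: "'a set set" and L :: "'a set" and p :: "'a \<Rightarrow> 'a"
    and M :: "'a set set"
  assumes graph: "simple_graph V E"
    and finite_pendants: "finite L"
    and pendants_disjoint: "L \<inter> V = {}"
    and parent_in_V: "l \<in> L \<Longrightarrow> p l \<in> V"
    and pendant_count: "v \<in> V \<Longrightarrow> card {l \<in> L. p l = v} = deg E v"
    and matching: "perfect_matching L M"
begin

definition E_dagger :: "'a set set" where
  "E_dagger = E \<union> (\<lambda>l. {l, p l}) ` L \<union> M"

lemma finite_edges: "finite E"
  by (rule simple_graph_finite_edges[OF graph])

lemma finite_matching: "finite M"
  by (rule perfect_matching_finite[OF matching finite_pendants])

lemma sum_parents: "(\<Sum>l\<in>L. g (p l)) = (\<Sum>e\<in>E. \<Sum>v\<in>e. g v)"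
  for g :: "'a \<Rightarrow> real"
proof -
  have "(\<Sum>l\<in>L. g (p l)) = (\<Sum>v\<in>V. \<Sum>l\<in>{l \<in> L. p l = v}. g (p l))"
    using graph finite_pendants parent_in_V
    by (intro sum.group[symmetric]) (auto simp: simple_graph_def)
  also have "\<dots> = (\<Sum>v\<in>V. real (deg E v) * g v)"
    using pendant_count by (intro sum.cong refl) simp
  also have "\<dots> = (\<Sum>e\<in>E. \<Sum>v\<in>e. g v)"
    by (rule sum_deg_mult[OF graph])
  finally show ?thesis .
qed

lemma card_pendants: "card L = 2 * card E"
proof -
  have "real (card L) = (\<Sum>e\<in>E. \<Sum>v\<in>e. 1)"
    using sum_parents[of "\<lambda>_. 1"] by simp
  also have "\<dots> = real (2 * card E)"
    using simple_graph_card_edge[OF graph] by simp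
  finally show ?thesis by linarith
qed

lemma card_matching: "card M = card E"
  using perfect_matching_card[OF matching finite_pendants] card_pendants by simp

lemma pendant_neq_parent: "l \<in> L \<Longrightarrow> l \<noteq> p l"
  using parent_in_V[of l] pendants_disjoint by auto

lemma inj_on_pendant_edge: "inj_on (\<lambda>l. {l, p l}) L"
proof (rule inj_onI)
  fix l l' assume "l \<in> L" "l' \<in> L" "{l, p l} = {l', p l'}"
  then have "l \<in> {l', p l'}" by blast
  moreover have "l \<noteq> p l'"
    using \<open>l \<in> L\<close> parent_in_V[OF \<open>l' \<in> L\<close>] pendants_disjoint by auto
  ultimately show "l = l'" by blast
qed

lemma sum_E_dagger:
  "(\<Sum>e\<in>E_dagger. F e) = (\<Sum>e\<in>E. F e) + (\<Sum>l\<in>L. F {l, p l}) + (\<Sum>e\<in>M. F e)"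
proof -
  have "{l, p l} \<notin> E \<and> {l, p l} \<notin> M" if "l \<in> L" for l
    using that parent_in_V[OF that] pendants_disjoint simple_graph_edge_subset[OF graph]
      perfect_matching_edge_subset[OF matching] by blast
  moreover have "e \<notin> M" if "e \<in> E" for e
  proof
    assume "e \<in> M"
    then have "e \<subseteq> V \<inter> L"
      using that simple_graph_edge_subset[OF graph] perfect_matching_edge_subset[OF matching] by blast
    then show False
      using pendants_disjoint simple_graph_card_edge[OF graph that] by (simp add: Int_commute)
  qed
  ultimately have "E \<inter> (\<lambda>l. {l, p l}) ` L = {}" "(E \<union> (\<lambda>l. {l, p l}) ` L) \<inter> M = {}"
    by auto
  then show ?thesis
    unfolding E_dagger_def
    using finite_edges finite_pendants finite_matching
    by (simp add: sum.union_disjoint sum.reindex[OF inj_on_pendant_edge])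
qed

lemma card_E_dagger: "card E_dagger = 4 * card E"
proof -
  have "card E_dagger = card E + card L + card M"
    using sum_E_dagger[of "\<lambda>_. 1 :: nat"] by simp
  then show ?thesis
    using card_pendants card_matching by simp
qed

lemma finite_E_dagger: "finite E_dagger"
  unfolding E_dagger_def using finite_edges finite_pendants finite_matching by simp

lemma deg_E_dagger_vertex:
  assumes "v \<in> V"
  shows "deg E_dagger v = 2 * deg E v"
proof -
  have "(\<Sum>l\<in>L. if v \<in> {l, p l} then 1 else 0) = (\<Sum>l\<in>L. if p l = v then 1 else (0::real))"
    using assms pendants_disjoint by (intro sum.cong refl) auto
  also have "\<dots> = real (deg E v)"
    using sum.inter_filter[OF finite_pendants, of "\<lambda>_. 1::real" "\<lambda>l. p l = v"]
      pendant_count[OF assms] by simp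
  finally have pendant: "(\<Sum>l\<in>L. if v \<in> {l, p l} then 1 else 0) = real (deg E v)" .
  have "v \<notin> e" if "e \<in> M" for e
    using assms pendants_disjoint perfect_matching_edge_subset[OF matching that] by auto
  then have matched: "(\<Sum>e\<in>M. if v \<in> e then 1 else 0) = (0::real)"
    by simp
  have "real (deg E_dagger v) = (\<Sum>e\<in>E. if v \<in> e then 1 else 0)
      + (\<Sum>l\<in>L. if v \<in> {l, p l} then 1 else 0) + (\<Sum>e\<in>M. if v \<in> e then 1 else 0)"
    unfolding real_deg_eq_sum[OF finite_E_dagger] by (rule sum_E_dagger)
  also have "\<dots> = real (2 * deg E v)"
    unfolding pendant matched real_deg_eq_sum[OF finite_edges, symmetric] by simp
  finally show ?thesis
    by (simp only: of_nat_eq_iff)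
qed

lemma deg_E_dagger_pendant:
  assumes "l \<in> L"
  shows "deg E_dagger l = 2"
proof -
  obtain e\<^sub>0 where e\<^sub>0: "e\<^sub>0 \<in> M" "l \<in> e\<^sub>0"
    using perfect_matching_cover[OF matching assms] by blast
  have "l \<notin> e" if "e \<in> E" for e
    using assms pendants_disjoint simple_graph_edge_subset[OF graph that] by auto
  then have old: "(\<Sum>e\<in>E. if l \<in> e then 1 else 0) = (0::real)"
    by simp
  have "(\<Sum>l'\<in>L. if l \<in> {l', p l'} then 1 else 0) = (\<Sum>l'\<in>L. if l' = l then 1 else (0::real))"
  proof (rule sum.cong[OF refl])
    fix l' assume "l' \<in> L"
    then have "p l' \<noteq> l"
      using assms parent_in_V[of l'] pendants_disjoint by auto
    then show "(if l \<in> {l', p l'} then 1 else 0) = (if l' = l then 1 else (0::real))"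
      by auto
  qed
  then have pendant: "(\<Sum>l'\<in>L. if l \<in> {l', p l'} then 1 else 0) = (1::real)"
    using finite_pendants assms by simp
  have "(\<Sum>e\<in>M. if l \<in> e then 1 else 0) = (\<Sum>e\<in>M. if e = e\<^sub>0 then 1 else (0::real))"
  proof (rule sum.cong[OF refl])
    fix e assume "e \<in> M"
    then have "l \<in> e \<longleftrightarrow> e = e\<^sub>0"
      using perfect_matching_unique[OF matching assms \<open>e \<in> M\<close> e\<^sub>0(1)] e\<^sub>0(2) by blast
    then show "(if l \<in> e then 1 else 0) = (if e = e\<^sub>0 then 1 else (0::real))"
      by simp
  qed
  then have matched: "(\<Sum>e\<in>M. if l \<in> e then 1 else 0) = (1::real)"
    using finite_matching e\<^sub>0(1) by simp
  have "real (deg E_dagger l) = (\<Sum>e\<in>E. if l \<in> e then 1 else 0)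
      + (\<Sum>l'\<in>L. if l \<in> {l', p l'} then 1 else 0) + (\<Sum>e\<in>M. if l \<in> e then 1 else 0)"
    unfolding real_deg_eq_sum[OF finite_E_dagger] by (rule sum_E_dagger)
  then show ?thesis
    unfolding old pendant matched by simp
qed

lemma degree_moment_E_dagger:
  "degree_moment E_dagger h = 2 * degree_moment E (\<lambda>t. h (2 * t)) + 4 * real (card E) * h 2"
proof -
  define D where "D v = real (deg E_dagger v)" for v
  have D_vertex: "D v = 2 * real (deg E v)" if "v \<in> V" for v
    using deg_E_dagger_vertex[OF that] by (simp add: D_def)
  have D_pendant: "D l = 2" if "l \<in> L" for l
    using deg_E_dagger_pendant[OF that] by (simp add: D_def)
  have old: "(\<Sum>e\<in>E. \<Sum>v\<in>e. h (D v)) = degree_moment E (\<lambda>t. h (2 * t))"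
    unfolding degree_moment_def using D_vertex simple_graph_edge_subset[OF graph]
    by (intro sum.cong refl) (metis subsetD)
  have "(\<Sum>l\<in>L. \<Sum>v\<in>{l, p l}. h (D v)) = (\<Sum>l\<in>L. h 2 + h (2 * real (deg E (p l))))"
    using pendant_neq_parent D_pendant D_vertex parent_in_V by (intro sum.cong refl) simp
  also have "\<dots> = 2 * real (card E) * h 2 + degree_moment E (\<lambda>t. h (2 * t))"
    using sum_parents[of "\<lambda>v. h (2 * real (deg E v))"] card_pendants
    by (simp add: sum.distrib degree_moment_def)
  finally have pendant: "(\<Sum>l\<in>L. \<Sum>v\<in>{l, p l}. h (D v))
      = 2 * real (card E) * h 2 + degree_moment E (\<lambda>t. h (2 * t))" .
  have "(\<Sum>e\<in>M. \<Sum>v\<in>e. h (D v)) = (\<Sum>e\<in>M. 2 * h 2)"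
  proof (rule sum.cong[OF refl])
    fix e assume "e \<in> M"
    then have "(\<Sum>v\<in>e. h (D v)) = (\<Sum>v\<in>e. h 2)"
      using D_pendant perfect_matching_edge_subset[OF matching \<open>e \<in> M\<close>]
      by (intro sum.cong refl) auto
    then show "(\<Sum>v\<in>e. h (D v)) = 2 * h 2"
      using perfect_matching_card_edge[OF matching \<open>e \<in> M\<close>] by simp
  qed
  then have matched: "(\<Sum>e\<in>M. \<Sum>v\<in>e. h (D v)) = 2 * real (card E) * h 2"
    using card_matching by simp
  show ?thesis
    unfolding degree_moment_def[of E_dagger] D_def[symmetric] sum_E_dagger old pendant matched
    by (simp add: degree_moment_def)
qed

lemma degree_product_sum_E_dagger:
  "degree_product_sum E_dagger
     = 4 * degree_product_sum E + 4 * degree_moment E (\<lambda>t. t) + 4 * real (card E)"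
proof -
  define D where "D v = real (deg E_dagger v)" for v
  have D_vertex: "D v = 2 * real (deg E v)" if "v \<in> V" for v
    using deg_E_dagger_vertex[OF that] by (simp add: D_def)
  have D_pendant: "D l = 2" if "l \<in> L" for l
    using deg_E_dagger_pendant[OF that] by (simp add: D_def)
  have "(\<Sum>e\<in>E. \<Prod>v\<in>e. D v) = (\<Sum>e\<in>E. 4 * (\<Prod>v\<in>e. real (deg E v)))"
  proof (rule sum.cong[OF refl])
    fix e assume "e \<in> E"
    then have "(\<Prod>v\<in>e. D v) = (\<Prod>v\<in>e. 2 * real (deg E v))"
      using D_vertex simple_graph_edge_subset[OF graph] by (auto intro!: prod.cong)
    also have "\<dots> = 4 * (\<Prod>v\<in>e. real (deg E v))"
      using simple_graph_card_edge[OF graph \<open>e \<in> E\<close>] by (simp add: prod.distrib)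
    finally show "(\<Prod>v\<in>e. D v) = 4 * (\<Prod>v\<in>e. real (deg E v))" .
  qed
  also have "\<dots> = 4 * degree_product_sum E"
    by (simp add: degree_product_sum_def sum_distrib_left)
  finally have old: "(\<Sum>e\<in>E. \<Prod>v\<in>e. D v) = 4 * degree_product_sum E" .
  have "(\<Sum>l\<in>L. \<Prod>v\<in>{l, p l}. D v) = (\<Sum>l\<in>L. 4 * real (deg E (p l)))"
    using pendant_neq_parent D_pendant D_vertex parent_in_V by (intro sum.cong refl) simp
  also have "\<dots> = 4 * degree_moment E (\<lambda>t. t)"
    using sum_parents[of "\<lambda>v. real (deg E v)"]
    by (simp add: degree_moment_def sum_distrib_left[symmetric])
  finally have pendant: "(\<Sum>l\<in>L. \<Prod>v\<in>{l, p l}. D v) = 4 * degree_moment E (\<lambda>t. t)" .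
  have "(\<Sum>e\<in>M. \<Prod>v\<in>e. D v) = (\<Sum>e\<in>M. 2 ^ card e)"
    using D_pendant perfect_matching_edge_subset[OF matching]
    by (intro sum.cong refl) (simp add: subset_iff cong: prod.cong)
  then have matched: "(\<Sum>e\<in>M. \<Prod>v\<in>e. D v) = 4 * real (card E)"
    using perfect_matching_card_edge[OF matching] card_matching by simp
  show ?thesis
    unfolding degree_product_sum_def[of E_dagger] D_def[symmetric] sum_E_dagger old pendant matched ..
qed

lemma assort_mean_E_dagger:
  assumes "E \<noteq> {}"
  shows "assort_mean E_dagger = assort_mean E + 1"
proof -
  have "real (card E) > 0"
    using assms finite_edges by (simp add: card_gt_0_iff)
  moreover have "degree_moment E (\<lambda>t. 2 * t) = 2 * degree_moment E (\<lambda>t. t)"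
    by (rule degree_moment_cmult)
  ultimately show ?thesis
    unfolding assort_mean_eq degree_moment_E_dagger card_E_dagger
    by (simp add: field_simps)
qed

lemma assort_num_E_dagger:
  assumes "E \<noteq> {}"
  shows "assort_num E_dagger = assort_num E"
proof -
  have m: "real (card E) > 0"
    using assms finite_edges by (simp add: card_gt_0_iff)
  then have "degree_moment E (\<lambda>t. t) = 2 * real (card E) * assort_mean E"
    by (simp add: assort_mean_eq)
  then show ?thesis
    using m unfolding assort_num_eq[of E_dagger] assort_num_eq[of E] assort_mean_E_dagger[OF assms]
      degree_product_sum_E_dagger card_E_dagger
    by (simp add: field_simps power2_eq_square)
qed

lemma assort_den_E_dagger:
  assumes "E \<noteq> {}"
  shows "assort_den E_dagger = 2 * assort_den E + (assort_mean E - 1)\<^sup>2"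
proof -
  have m: "real (card E) > 0"
    using assms finite_edges by (simp add: card_gt_0_iff)
  have "degree_moment E (\<lambda>t. (2 * t)\<^sup>2) = 4 * degree_moment E (\<lambda>t. t\<^sup>2)"
    using degree_moment_cmult[of E 4 "\<lambda>t. t\<^sup>2"] by (simp add: power_mult_distrib)
  then show ?thesis
    using m unfolding assort_den_eq[of E_dagger] assort_den_eq[of E] assort_mean_E_dagger[OF assms]
      degree_moment_E_dagger card_E_dagger
    by (simp add: field_simps power2_eq_square)
qed

end

theorem lemma4:
  fixes V V' :: "'a set" and E E' :: "'a set set"
  assumes "tree V E"
    and "card V \<ge> 7"
    and "neutral E"
    and "leaf_connect V E V' E'"
  shows "neutral E'"
proof -
  obtain L p M where L: "finite L" "L \<inter> V = {}" "\<forall>l\<in>L. p l \<in> V"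
      "\<forall>v\<in>V. card {l \<in> L. p l = v} = deg E v" "perfect_matching L M"
    and E'_eq: "E' = E \<union> (\<lambda>l. {l, p l}) ` L \<union> M"
    using assms(4) unfolding leaf_connect_def by blast
  interpret leaf_connection V E L p M
    using assms(1) L by unfold_locales (auto simp: tree_def)
  have E': "E' = E_dagger"
    unfolding E_dagger_def by (rule E'_eq)
  have "E \<noteq> {}" and num: "assort_num E = 0" and den: "assort_den E \<noteq> 0"
    using assms(3) by (auto simp: neutral_def assortativity_def)
  have "0 \<le> assort_den E"
    using simple_graph_card_edge[OF graph] by (rule assort_den_nonneg)
  then have "assort_den E_dagger > 0"
    using den unfolding assort_den_E_dagger[OF \<open>E \<noteq> {}\<close>] by (simp add: add_pos_nonneg)
  moreover have "card E_dagger \<ge> 1"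
    using \<open>E \<noteq> {}\<close> finite_edges card_E_dagger by (simp add: Suc_le_eq card_gt_0_iff)
  ultimately show ?thesis
    unfolding E' neutral_def assortativity_def
    using finite_E_dagger assort_num_E_dagger[OF \<open>E \<noteq> {}\<close>] num by simp
qed

end
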